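(* Let $(X,d)$ be a compact metric space and $f_{0,\infty}=\{f_n\}_{n=0}^\infty$ a sequence of continuous self-maps of $X$. For $i\ge0$ let $f_{i,\infty}=\{f_n\}_{n=i}^\infty$. Then \[h^{*}(f_{i,\infty})\leq h^{*}(f_{j,\infty}),\quad 0\leq i\leq j<\infty.\]
   Context: $f_i^n=f_{i+n-1}\circ\cdots\circ f_i$ ($n\ge1$), $f_i^0=\mathrm{id}$, $f_i^{-n}(B)=(f_i^n)^{-1}(B)$. $\mathcal S$ is the set of strictly increasing sequences $A=\{a_k\}_{k\ge1}$ of nonnegative integers. The topological sequence entropy of $f_{i,\infty}$ along $A$ is $h_A(f_{i,\infty})=\sup_{\mathscr A}\limsup_{n\to\infty}\frac1n\log\mathcal N(\bigvee_{k=1}^n f_i^{-a_k}\mathscr A)$ over finite open covers $\mathscr A$ ($\bigvee$ = common refinement, $\mathcal N$ = minimal cardinality of a subcover), and $h^*(f_{i,\infty})=\sup_{A\in\mathcal S}h_A(f_{i,\infty})$. *)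

theory Defs
  imports "HOL-Analysis.Analysis" "HOL-Library.Liminf_Limsup"
begin

text \<open>Nonautonomous iterates of a sequence g = (g 0, g 1, ...):
  fiter g 0 = id, fiter g (Suc n) = g n o fiter g n, i.e. fiter g n = g (n-1) o ... o g 0.
  For f_{i,infinity} we use g = (\<lambda>n. f (i+n)), so fiter g n = f_i^n.\<close>
primrec fiter :: "(nat \<Rightarrow> 'a \<Rightarrow> 'a) \<Rightarrow> nat \<Rightarrow> 'a \<Rightarrow> 'a" where
  "fiter g 0 = id"
| "fiter g (Suc n) = g n \<circ> fiter g n"

definition fpre :: "'a set \<Rightarrow> (nat \<Rightarrow> 'a \<Rightarrow> 'a) \<Rightarrow> nat \<Rightarrow> 'a set \<Rightarrow> 'a set" where
  "fpre X g n B = {x \<in> X. fiter g n x \<in> B}"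

definition open_covers :: "'a::topological_space set \<Rightarrow> 'a set set set" where
  "open_covers X = {\<A>. finite \<A> \<and> (\<forall>U\<in>\<A>. openin (top_of_set X) U) \<and> \<Union>\<A> = X}"

text \<open>Common refinement of f^{-a_k} A for k = 1..n (indices shifted to 0..<n).\<close>
definition join_pre :: "'a set \<Rightarrow> (nat \<Rightarrow> 'a \<Rightarrow> 'a) \<Rightarrow> (nat \<Rightarrow> nat) \<Rightarrow> nat \<Rightarrow> 'a set set \<Rightarrow> 'a set set" where
  "join_pre X g a n \<A> =
     {X \<inter> (\<Inter>k\<in>{..<n}. fpre X g (a k) (U k)) | U. \<forall>k<n. U k \<in> \<A>}"

definition Ncov :: "'a set \<Rightarrow> 'a set set \<Rightarrow> nat" where
  "Ncov X \<U> = Inf {card \<V> | \<V>. \<V> \<subseteq> \<U> \<and> finite \<V> \<and> X \<subseteq> \<Union>\<V>}"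

definition seq_entropy :: "'a::topological_space set \<Rightarrow> (nat \<Rightarrow> 'a \<Rightarrow> 'a) \<Rightarrow> (nat \<Rightarrow> nat) \<Rightarrow> ereal" where
  "seq_entropy X g a =
     (SUP \<A>\<in>open_covers X.
        limsup (\<lambda>n. ereal (ln (real (Ncov X (join_pre X g a n \<A>))) / real n)))"

definition seq_entropy_star :: "'a::topological_space set \<Rightarrow> (nat \<Rightarrow> 'a \<Rightarrow> 'a) \<Rightarrow> ereal" where
  "seq_entropy_star X g = (SUP a\<in>{a :: nat \<Rightarrow> nat. strict_mono a}. seq_entropy X g a)"

end

theory Submission
  imports Defs
begin

text \<open>Write j = i + m, so that f_i^(m+t) = f_j^t \<circ> f_i^m. For a strictly increasing
  sequence a put b_k = a_(m+k) - m. The join of the covers f_i^(-a_k) \<A> over the first m + n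
  indices is the join of its first m terms, which has at most |\<A>|^m members, with the
  f_i^m-preimage of the join of the covers f_j^(-b_k) \<A> over the first n indices. Hence
  N_(m+n) \<le> |\<A>|^m N'_n, the constant factor disappears in limsup (log N_n) / n, and so
  h_a(f_i) \<le> h_b(f_j) \<le> h*(f_j).\<close>

lemma fiter_add: "fiter g (m + n) = fiter (\<lambda>k. g (m + k)) n \<circ> fiter g m"
  by (induction n) (simp_all add: comp_assoc)

lemma fiter_in:
  assumes "\<And>n. g n ` X \<subseteq> X" "x \<in> X"
  shows "fiter g n x \<in> X"
proof (induction n)
  case (Suc n)
  then show ?case
    using assms(1) by (simp add: image_subset_iff)
qed (simp add: assms(2))

lemma Ncov_le:
  assumes "V \<subseteq> U" "finite V" "X \<subseteq> \<Union>V"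
  shows "Ncov X U \<le> card V"
  unfolding Ncov_def by (rule cInf_lower) (use assms in auto)

lemma Ncov_attained:
  assumes "finite U" "X \<subseteq> \<Union>U"
  obtains V where "V \<subseteq> U" "finite V" "X \<subseteq> \<Union>V" "card V = Ncov X U"
proof -
  let ?S = "{card V | V. V \<subseteq> U \<and> finite V \<and> X \<subseteq> \<Union>V}"
  have "card U \<in> ?S"
    using assms by auto
  then have "Ncov X U \<in> ?S"
    unfolding Ncov_def by (intro Inf_nat_def1) auto
  then obtain V where "V \<subseteq> U" "finite V" "X \<subseteq> \<Union>V" "Ncov X U = card V"
    by auto
  then show thesis
    using that by simp
qed

lemma Ncov_inter_le:
  assumes "finite U" "X \<subseteq> \<Union>U" "finite V" "X \<subseteq> \<Union>V"
  shows "Ncov X {P \<inter> Q | P Q. P \<in> U \<and> Q \<in> V} \<le> Ncov X U * Ncov X V"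
proof -
  obtain U' where U': "U' \<subseteq> U" "finite U'" "X \<subseteq> \<Union>U'" "card U' = Ncov X U"
    using Ncov_attained[OF assms(1,2)] .
  obtain V' where V': "V' \<subseteq> V" "finite V'" "X \<subseteq> \<Union>V'" "card V' = Ncov X V"
    using Ncov_attained[OF assms(3,4)] .
  let ?W = "(\<lambda>(P, Q). P \<inter> Q) ` (U' \<times> V')"
  have "X \<subseteq> \<Union>?W"
  proof
    fix x assume "x \<in> X"
    then obtain P Q where "P \<in> U'" "Q \<in> V'" "x \<in> P" "x \<in> Q"
      using U'(3) V'(3) by blast
    then show "x \<in> \<Union>?W" by blast
  qed
  moreover have "?W \<subseteq> {P \<inter> Q | P Q. P \<in> U \<and> Q \<in> V}"
  proof
    fix W assume "W \<in> ?W"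
    then obtain P Q where "W = P \<inter> Q" "P \<in> U" "Q \<in> V"
      using U'(1) V'(1) by auto
    then show "W \<in> {P \<inter> Q | P Q. P \<in> U \<and> Q \<in> V}"
      by (intro CollectI exI[where x = P] exI[where x = Q]) simp
  qed
  ultimately have "Ncov X {P \<inter> Q | P Q. P \<in> U \<and> Q \<in> V} \<le> card ?W"
    using U'(2) V'(2) by (intro Ncov_le) auto
  also have "\<dots> \<le> card (U' \<times> V')"
    by (rule card_image_le) (use U' V' in simp)
  finally show ?thesis using U' V' by (simp add: card_cartesian_product)
qed

lemma Ncov_preimage_le:
  assumes "\<phi> ` X \<subseteq> X" "finite V" "X \<subseteq> \<Union>V"
  shows "Ncov X ((\<lambda>W. {x \<in> X. \<phi> x \<in> W}) ` V) \<le> Ncov X V"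
proof -
  obtain V' where V': "V' \<subseteq> V" "finite V'" "X \<subseteq> \<Union>V'" "card V' = Ncov X V"
    using Ncov_attained[OF assms(2,3)] .
  have "Ncov X ((\<lambda>W. {x \<in> X. \<phi> x \<in> W}) ` V) \<le> card ((\<lambda>W. {x \<in> X. \<phi> x \<in> W}) ` V')"
  proof (rule Ncov_le)
    show "X \<subseteq> \<Union>((\<lambda>W. {x \<in> X. \<phi> x \<in> W}) ` V')"
      using assms(1) V'(3) by blast
  qed (use V'(1,2) in auto)
  also have "\<dots> \<le> card V'"
    by (rule card_image_le) (fact V'(2))
  finally show ?thesis using V'(4) by simp
qed

lemma join_pre_eq_image:
  "join_pre X g a n A = (\<lambda>U. X \<inter> (\<Inter>k\<in>{..<n}. fpre X g (a k) (U k))) ` PiE {..<n} (\<lambda>_. A)"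
proof (intro equalityI subsetI)
  fix W assume "W \<in> join_pre X g a n A"
  then obtain U where W: "W = X \<inter> (\<Inter>k\<in>{..<n}. fpre X g (a k) (U k))" and U: "\<forall>k<n. U k \<in> A"
    unfolding join_pre_def by auto
  have "W = X \<inter> (\<Inter>k\<in>{..<n}. fpre X g (a k) (restrict U {..<n} k))"
    by (simp add: W cong: INF_cong_simp)
  moreover have "restrict U {..<n} \<in> PiE {..<n} (\<lambda>_. A)"
    using U by simp
  ultimately show "W \<in> (\<lambda>U. X \<inter> (\<Inter>k\<in>{..<n}. fpre X g (a k) (U k))) ` PiE {..<n} (\<lambda>_. A)"
    by (rule image_eqI)
next
  fix W assume "W \<in> (\<lambda>U. X \<inter> (\<Inter>k\<in>{..<n}. fpre X g (a k) (U k))) ` PiE {..<n} (\<lambda>_. A)"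
  then obtain U where "W = X \<inter> (\<Inter>k\<in>{..<n}. fpre X g (a k) (U k))" "U \<in> PiE {..<n} (\<lambda>_. A)"
    by auto
  then show "W \<in> join_pre X g a n A"
    unfolding join_pre_def by (intro CollectI exI[where x = U]) auto
qed

lemma card_join_pre_le:
  assumes "finite A"
  shows "card (join_pre X g a n A) \<le> card A ^ n"
proof -
  have "card (join_pre X g a n A) \<le> card (PiE {..<n} (\<lambda>_. A))"
    unfolding join_pre_eq_image by (rule card_image_le) (simp add: assms finite_PiE)
  also have "\<dots> = card A ^ n"
    by (simp add: card_PiE)
  finally show ?thesis .
qed

lemma finite_join_pre: "finite A \<Longrightarrow> finite (join_pre X g a n A)"
  unfolding join_pre_eq_image by (simp add: finite_PiE)

lemma join_pre_covers:
  assumes "\<Union>A = X" "\<And>n. g n ` X \<subseteq> X"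
  shows "X \<subseteq> \<Union>(join_pre X g a n A)"
proof
  fix x assume x: "x \<in> X"
  have "\<forall>k. \<exists>B. B \<in> A \<and> fiter g (a k) x \<in> B"
    using fiter_in[OF assms(2) x] assms(1) by auto
  from choice[OF this] obtain U where U: "\<forall>k. U k \<in> A \<and> fiter g (a k) x \<in> U k" ..
  then have "x \<in> X \<inter> (\<Inter>k\<in>{..<n}. fpre X g (a k) (U k))"
    using x by (auto simp: fpre_def)
  moreover have "X \<inter> (\<Inter>k\<in>{..<n}. fpre X g (a k) (U k)) \<in> join_pre X g a n A"
    unfolding join_pre_def using U by (intro CollectI exI[where x = U]) simp
  ultimately show "x \<in> \<Union>(join_pre X g a n A)"
    by (rule UnionI[rotated])
qed

lemma INT_lessThan_add:
  fixes m n :: nat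
  shows "(\<Inter>k\<in>{..<m + n}. F k) = (\<Inter>k\<in>{..<m}. F k) \<inter> (\<Inter>l\<in>{..<n}. F (m + l))"
proof -
  have "(\<forall>k<m + n. P k) \<longleftrightarrow> (\<forall>k<m. P k) \<and> (\<forall>l<n. P (m + l))" for P
  proof safe
    fix k assume "\<forall>k<m. P k" "\<forall>l<n. P (m + l)" "k < m + n"
    then show "P k" by (cases "k < m") (auto dest: spec[of _ "k - m"])
  qed auto
  from this[of "\<lambda>k. _ \<in> F k"] show ?thesis
    by auto
qed

lemma join_pre_add:
  "join_pre X g a (m + n) A
     = {P \<inter> Q | P Q. P \<in> join_pre X g a m A \<and> Q \<in> join_pre X g (\<lambda>l. a (m + l)) n A}"
proof (intro equalityI subsetI)
  fix W assume "W \<in> join_pre X g a (m + n) A"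
  then obtain U where W: "W = X \<inter> (\<Inter>k\<in>{..<m + n}. fpre X g (a k) (U k))"
    and U: "\<forall>k<m + n. U k \<in> A"
    unfolding join_pre_def by auto
  let ?P = "X \<inter> (\<Inter>k\<in>{..<m}. fpre X g (a k) (U k))"
  let ?Q = "X \<inter> (\<Inter>l\<in>{..<n}. fpre X g (a (m + l)) (U (m + l)))"
  have "W = ?P \<inter> ?Q"
    unfolding W INT_lessThan_add by auto
  moreover have "?P \<in> join_pre X g a m A"
    unfolding join_pre_def using U by (intro CollectI exI[where x = U]) simp
  moreover have "?Q \<in> join_pre X g (\<lambda>l. a (m + l)) n A"
    unfolding join_pre_def using U by (intro CollectI exI[where x = "\<lambda>l. U (m + l)"]) simp
  ultimately show "W \<in> {P \<inter> Q | P Q. P \<in> join_pre X g a m A \<and> Q \<in> join_pre X g (\<lambda>l. a (m + l)) n A}"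
    by (intro CollectI exI[where x = ?P] exI[where x = ?Q]) simp
next
  fix W assume "W \<in> {P \<inter> Q | P Q. P \<in> join_pre X g a m A \<and> Q \<in> join_pre X g (\<lambda>l. a (m + l)) n A}"
  then obtain U V where
    W: "W = (X \<inter> (\<Inter>k\<in>{..<m}. fpre X g (a k) (U k)))
          \<inter> (X \<inter> (\<Inter>l\<in>{..<n}. fpre X g (a (m + l)) (V l)))"
    and UV: "\<forall>k<m. U k \<in> A" "\<forall>l<n. V l \<in> A"
    unfolding join_pre_def by auto
  define T where "T k = (if k < m then U k else V (k - m))" for k
  have "W = X \<inter> (\<Inter>k\<in>{..<m + n}. fpre X g (a k) (T k))"
    unfolding W INT_lessThan_add T_def by auto
  moreover have "\<forall>k<m + n. T k \<in> A"
    using UV by (auto simp: T_def)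
  ultimately show "W \<in> join_pre X g a (m + n) A"
    unfolding join_pre_def by (intro CollectI exI[where x = T]) simp
qed

lemma join_pre_shift:
  assumes "\<And>n. g n ` X \<subseteq> X"
  shows "join_pre X g (\<lambda>l. m + b l) n A = fpre X g m ` join_pre X (\<lambda>k. g (m + k)) b n A"
proof -
  have pre: "fpre X g m (X \<inter> (\<Inter>l\<in>{..<n}. fpre X (\<lambda>k. g (m + k)) (b l) (U l)))
      = X \<inter> (\<Inter>l\<in>{..<n}. fpre X g (m + b l) (U l))" for U
    using fiter_in[OF assms] by (auto simp: fpre_def fiter_add)
  show ?thesis
  proof (intro equalityI subsetI)
    fix W assume "W \<in> join_pre X g (\<lambda>l. m + b l) n A"
    then obtain U where "W = X \<inter> (\<Inter>l\<in>{..<n}. fpre X g (m + b l) (U l))" "\<forall>l<n. U l \<in> A"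
      unfolding join_pre_def by auto
    then show "W \<in> fpre X g m ` join_pre X (\<lambda>k. g (m + k)) b n A"
      unfolding join_pre_def pre[symmetric]
      by (intro image_eqI CollectI exI[where x = U]) simp_all
  next
    fix W assume "W \<in> fpre X g m ` join_pre X (\<lambda>k. g (m + k)) b n A"
    then obtain U where "W = X \<inter> (\<Inter>l\<in>{..<n}. fpre X g (m + b l) (U l))" "\<forall>l<n. U l \<in> A"
      unfolding join_pre_def by (auto simp: pre)
    then show "W \<in> join_pre X g (\<lambda>l. m + b l) n A"
      unfolding join_pre_def by (intro CollectI exI[where x = U]) simp
  qed
qed

lemma Ncov_join_pre_add_le:
  assumes A: "finite A" "\<Union>A = X" and g: "\<And>n. g n ` X \<subseteq> X"
    and a: "\<And>l. a (m + l) = m + b l"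
  shows "Ncov X (join_pre X g a (m + n) A) \<le> card A ^ m * Ncov X (join_pre X (\<lambda>k. g (m + k)) b n A)"
proof -
  have h: "(\<lambda>k. g (m + k)) n ` X \<subseteq> X" for n
    using g .
  have "Ncov X (join_pre X g a (m + n) A)
      \<le> Ncov X (join_pre X g a m A) * Ncov X (join_pre X g (\<lambda>l. a (m + l)) n A)"
    unfolding join_pre_add
    by (intro Ncov_inter_le finite_join_pre join_pre_covers A g)
  also have "Ncov X (join_pre X g a m A) \<le> card A ^ m"
    using Ncov_le[OF order_refl finite_join_pre join_pre_covers, OF A(1) A(2) g]
      card_join_pre_le[OF A(1)]
    by (rule order_trans)
  also have "Ncov X (join_pre X g (\<lambda>l. a (m + l)) n A) \<le> Ncov X (join_pre X (\<lambda>k. g (m + k)) b n A)"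
    unfolding a join_pre_shift[OF g] fpre_def
    by (intro Ncov_preimage_le finite_join_pre join_pre_covers A h)
       (auto intro: fiter_in[OF g])
  finally show ?thesis
    by (simp add: mult_right_mono)
qed

lemma ln_div_le_of_le_mult:
  fixes u v c :: nat and m n :: nat
  assumes "u \<le> c * v" "0 < n"
  shows "ln (real u) / real (m + n) \<le> ln (real (max 1 c)) / real (m + n) + ln (real v) / real n"
proof -
  have ln_nonneg: "0 \<le> ln (real k)" for k :: nat
    by (cases "k = 0") simp_all
  have "ln (real u) \<le> ln (real (max 1 c)) + ln (real v)"
  proof (cases "u = 0")
    case False
    then have "0 < c * v"
      using assms(1) by linarith
    then have "0 < v" "0 < c"
      by simp_all
    then have "ln (real u) \<le> ln (real c * real v)"
      using False assms(1) by (simp flip: of_nat_mult)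
    also have "\<dots> = ln (real (max 1 c)) + ln (real v)"
      using \<open>0 < v\<close> \<open>0 < c\<close> by (simp add: ln_mult max_def)
    finally show ?thesis .
  qed (simp add: ln_nonneg add_nonneg_nonneg)
  then have "ln (real u) / real (m + n) \<le> ln (real (max 1 c)) / real (m + n) + ln (real v) / real (m + n)"
    by (simp add: divide_right_mono flip: add_divide_distrib)
  also have "ln (real v) / real (m + n) \<le> ln (real v) / real n"
    using ln_nonneg assms(2) by (intro divide_left_mono) auto
  finally show ?thesis by simp
qed

lemma limsup_const_div_shift: "limsup (\<lambda>n. ereal (C / real (m + n))) = 0"
proof -
  have "filterlim (\<lambda>n. real m + real n) at_top sequentially"
    by (rule filterlim_tendsto_add_at_top[OF tendsto_const filterlim_real_sequentially])
  then have "(\<lambda>n. C / (real m + real n)) \<longlonglongrightarrow> 0"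
    by (rule real_tendsto_divide_at_top[OF tendsto_const])
  then have "(\<lambda>n. ereal (C / real (m + n))) \<longlonglongrightarrow> 0"
    by (simp add: zero_ereal_def)
  then show ?thesis
    by (simp add: lim_imp_Limsup)
qed

lemma limsup_ln_div_le_of_le_mult:
  fixes u v :: "nat \<Rightarrow> nat"
  assumes "\<And>n. u (m + n) \<le> c * v n"
  shows "limsup (\<lambda>n. ereal (ln (real (u n)) / real n)) \<le> limsup (\<lambda>n. ereal (ln (real (v n)) / real n))"
    (is "limsup ?x \<le> limsup ?y")
proof -
  let ?e = "\<lambda>n. ereal (ln (real (max 1 c)) / real (m + n))"
  have "limsup ?x = limsup (\<lambda>n. ?x (m + n))"
    using limsup_shift_k[of ?x m] by (simp add: add.commute)
  also have "\<dots> \<le> limsup (\<lambda>n. ?e n + ?y n)"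
  proof (rule Limsup_mono)
    have "?x (m + n) \<le> ?e n + ?y n" if "0 < n" for n
      using ln_div_le_of_le_mult[OF assms that] by simp
    then show "\<forall>\<^sub>F n in sequentially. ?x (m + n) \<le> ?e n + ?y n"
      by (auto simp: eventually_sequentially intro!: exI[of _ 1])
  qed
  also have "\<dots> \<le> limsup ?e + limsup ?y"
    by (rule ereal_limsup_add_mono)
  also have "\<dots> = limsup ?y"
    by (simp only: limsup_const_div_shift add_0_left)
  finally show ?thesis .
qed

lemma strict_mono_shift_diff:
  fixes a :: "nat \<Rightarrow> nat"
  assumes "strict_mono a"
  shows "strict_mono (\<lambda>l. a (m + l) - m)"
proof (rule strict_monoI)
  fix x y :: nat assume "x < y"
  then have "a (m + x) < a (m + y)"
    using assms by (simp add: strict_monoD)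
  moreover have "m \<le> a (m + x)"
    using strict_mono_imp_increasing[OF assms, of "m + x"] by simp
  ultimately show "a (m + x) - m < a (m + y) - m"
    by simp
qed

lemma seq_entropy_le_shift:
  assumes g: "\<And>n. g n ` X \<subseteq> X" and a: "strict_mono a"
  shows "seq_entropy X g a \<le> seq_entropy X (\<lambda>k. g (m + k)) (\<lambda>l. a (m + l) - m)"
  unfolding seq_entropy_def
proof (rule SUP_mono)
  fix A assume A: "A \<in> open_covers X"
  then have "finite A" "\<Union>A = X"
    by (simp_all add: open_covers_def)
  have "a (m + l) = m + (a (m + l) - m)" for l
    using strict_mono_imp_increasing[OF a, of "m + l"] by simp
  then have "Ncov X (join_pre X g a (m + n) A)
      \<le> card A ^ m * Ncov X (join_pre X (\<lambda>k. g (m + k)) (\<lambda>l. a (m + l) - m) n A)" for n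
    by (rule Ncov_join_pre_add_le[OF \<open>finite A\<close> \<open>\<Union>A = X\<close> g])
  then have "limsup (\<lambda>n. ereal (ln (real (Ncov X (join_pre X g a n A))) / real n))
      \<le> limsup (\<lambda>n. ereal (ln (real (Ncov X (join_pre X (\<lambda>k. g (m + k)) (\<lambda>l. a (m + l) - m) n A))) / real n))"
    by (rule limsup_ln_div_le_of_le_mult)
  then show "\<exists>A'\<in>open_covers X.
      limsup (\<lambda>n. ereal (ln (real (Ncov X (join_pre X g a n A))) / real n))
      \<le> limsup (\<lambda>n. ereal (ln (real (Ncov X (join_pre X (\<lambda>k. g (m + k)) (\<lambda>l. a (m + l) - m) n A'))) / real n))"
    by (rule bexI[OF _ A])
qed

lemma seq_entropy_star_le_shift:
  assumes "\<And>n. g n ` X \<subseteq> X"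
  shows "seq_entropy_star X g \<le> seq_entropy_star X (\<lambda>k. g (m + k))"
  unfolding seq_entropy_star_def
proof (rule SUP_least)
  fix a :: "nat \<Rightarrow> nat" assume "a \<in> {a. strict_mono a}"
  then have a: "strict_mono a" by simp
  have "seq_entropy X g a \<le> seq_entropy X (\<lambda>k. g (m + k)) (\<lambda>l. a (m + l) - m)"
    using assms a by (rule seq_entropy_le_shift)
  also have "\<dots> \<le> (SUP b\<in>{b. strict_mono b}. seq_entropy X (\<lambda>k. g (m + k)) b)"
    using strict_mono_shift_diff[OF a] by (intro SUP_upper) simp
  finally show "seq_entropy X g a \<le> (SUP b\<in>{b. strict_mono b}. seq_entropy X (\<lambda>k. g (m + k)) b)" .
qed

theorem proposition4p5:
  fixes X :: "'a::metric_space set" and f :: "nat \<Rightarrow> 'a \<Rightarrow> 'a" and i j :: nat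
  assumes "compact X"
    and "\<And>n. continuous_on X (f n)"
    and "\<And>n. f n ` X \<subseteq> X"
    and "i \<le> j"
  shows "seq_entropy_star X (\<lambda>n. f (i + n)) \<le> seq_entropy_star X (\<lambda>n. f (j + n))"
proof -
  obtain m where "j = i + m"
    using \<open>i \<le> j\<close> by (auto simp: le_iff_add)
  then have "(\<lambda>n. f (j + n)) = (\<lambda>k. (\<lambda>n. f (i + n)) (m + k))"
    by (simp add: add.assoc)
  then show ?thesis
    using seq_entropy_star_le_shift[of "\<lambda>n. f (i + n)" X m] assms(3) by simp
qed

end
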